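(* For every integer $j\ge0$, in $\mathbb{Z}[q,q^{-1}][[y]]$, \[ (-1)^jq^{-\binom{j+1}{2}}y^{-j}\sum_{i\ge j}(-1)^iq^{\binom{i+1}{2}}\begin{bmatrix} i\\ j\end{bmatrix}y^i\prod_{r=1}^{i+1}\frac{1}{1-q^{r+j}y}=1. \]
   Context: $[m]=1+q+\dots+q^{m-1}$, $[m]!=\prod_{s=1}^m[s]$, and $\begin{bmatrix} i\\ j\end{bmatrix}=\frac{[i]!}{[j]![i-j]!}$ is the Gaussian binomial coefficient. Note $y^{-j}y^i=y^{i-j}$ with $i\ge j$, so each summand is a power series in $y$, and the sum converges $y$-adically. *)

theory Defs
  imports "HOL-Computational_Algebra.Formal_Power_Series"
          "HOL-Computational_Algebra.Formal_Laurent_Series"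
begin

text \<open>q-integers, q-factorials and Gaussian binomial coefficients, with q := fls_X,
  computed in the Laurent series field over the rationals (containing Z[q,q^-1]).\<close>

definition qint :: "nat \<Rightarrow> rat fls" where
  "qint m = (\<Sum>k<m. fls_X ^ k)"

definition qfact :: "nat \<Rightarrow> rat fls" where
  "qfact m = (\<Prod>s=1..m. qint s)"

definition qbinom :: "nat \<Rightarrow> nat \<Rightarrow> rat fls" where
  "qbinom i j = qfact i / (qfact j * qfact (i - j))"

end

theory Submission
  imports Defs
begin

text \<open>Let S = (-1)^j q^(j+1 choose 2) and
  G_m(y) = sum_{k<=j} (-1)^k q^(m+k+1 choose 2) [m, j-k] y^k. The remainders of the series are
  S - sum_{i<n} t_{i+j} = (-1)^(n+j) y^n G_{n+j}(y) / (q^(j+1) y; q)_{n+j}: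
  for n = 0 this is Cauchy's finite q-binomial theorem for (q^(j+1) y; q)_j, and the step from
  n to n + 1 is the q-Pascal rule. Being divisible by y^n, the remainders tend to 0 y-adically,
  so the series sums to S.\<close>

lemma choose_2_Suc: "Suc n choose 2 = (n choose 2) + n"
  by (simp add: numeral_2_eq_2)

lemma choose_2_add: "Suc (j + k) choose 2 = (Suc j choose 2) + (j * k + (Suc k choose 2))"
  by (induction k) (simp_all add: choose_2_Suc)

lemma fps_mult_one_minus_const_X_nth:
  fixes f :: "'a::comm_ring_1 fps"
  shows "(f * (1 - fps_const c * fps_X)) $ k = f $ k - (if k = 0 then 0 else c * f $ (k - 1))"
proof -
  have "f * (1 - fps_const c * fps_X) = f - fps_const c * (fps_X * f)"
    by (simp add: algebra_simps)
  then show ?thesis by simp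
qed

lemma qint_add: "qint (a + b) = qint a + fls_X ^ a * qint b"
  by (induction b) (simp_all add: qint_def algebra_simps power_add)

lemma qint_Suc_nonzero: "qint (Suc n) \<noteq> 0"
proof
  assume "qint (Suc n) = 0"
  moreover have "fls_nth (qint (Suc n)) 0 = 1"
    unfolding qint_def fls_nth_sum by (simp add: sum.delta)
  ultimately show False by simp
qed

lemma qfact_0 [simp]: "qfact 0 = 1"
  by (simp add: qfact_def)

lemma qfact_Suc: "qfact (Suc n) = qfact n * qint (Suc n)"
  by (simp add: qfact_def)

lemma qfact_nonzero: "qfact n \<noteq> 0"
  by (induction n) (simp_all add: qfact_Suc qint_Suc_nonzero)

text \<open>For \<open>k > n\<close>, \<open>qbinom n k\<close> is a junk value (truncated subtraction);
  extending by zero instead makes the q-Pascal rules hold for all indices.\<close>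

definition gauss_binom :: "nat \<Rightarrow> nat \<Rightarrow> rat fls" where
  "gauss_binom n k = (if k \<le> n then qbinom n k else 0)"

lemma gauss_binom_0_right [simp]: "gauss_binom n 0 = 1"
  by (simp add: gauss_binom_def qbinom_def qfact_nonzero)

lemma gauss_binom_self [simp]: "gauss_binom n n = 1"
  by (simp add: gauss_binom_def qbinom_def qfact_nonzero)

lemma gauss_binom_eq_0: "n < k \<Longrightarrow> gauss_binom n k = 0"
  by (simp add: gauss_binom_def)

lemma gauss_binom_symmetric: "k \<le> n \<Longrightarrow> gauss_binom n (n - k) = gauss_binom n k"
  by (simp add: gauss_binom_def qbinom_def mult.commute)

lemma gauss_binom_Suc_Suc:
  "gauss_binom (Suc n) (Suc k) = gauss_binom n k + fls_X ^ Suc k * gauss_binom n (Suc k)"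
proof (cases "Suc k \<le> n")
  case True
  then obtain d where n: "n = Suc k + d" by (metis le_iff_add)
  have "qint (Suc n) = qint (Suc k) + fls_X ^ Suc k * qint (Suc d)"
    using qint_add[of "Suc k" "Suc d"] by (simp add: n)
  then have "qfact (Suc n) = qfact n * (qint (Suc k) + fls_X ^ Suc k * qint (Suc d))"
    by (simp add: qfact_Suc)
  moreover have "n - k = Suc d" "n - Suc k = d" by (simp_all add: n)
  ultimately show ?thesis
    using True qfact_nonzero[of k] qfact_nonzero[of d] qint_Suc_nonzero[of k] qint_Suc_nonzero[of d]
    by (simp add: gauss_binom_def qbinom_def qfact_Suc field_simps)
next
  case False
  then consider "k = n" | "n < k" by linarith
  then show ?thesis by cases (simp_all add: gauss_binom_eq_0)
qed

lemma gauss_binom_Suc_Suc':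
  "gauss_binom (Suc n) (Suc k) = gauss_binom n (Suc k) + fls_X ^ (n - k) * gauss_binom n k"
proof (cases "k < n")
  case True
  then obtain d where n: "n = Suc k + d" by (metis Suc_leI le_iff_add)
  have "gauss_binom (Suc n) (Suc k) = gauss_binom (Suc n) (Suc d)"
    using gauss_binom_symmetric[of "Suc k" "Suc n"] by (simp add: n)
  also have "\<dots> = gauss_binom n d + fls_X ^ Suc d * gauss_binom n (Suc d)"
    by (rule gauss_binom_Suc_Suc)
  also have "gauss_binom n d = gauss_binom n (Suc k)"
    using gauss_binom_symmetric[of "Suc k" n] by (simp add: n)
  also have "gauss_binom n (Suc d) = gauss_binom n k"
    using gauss_binom_symmetric[of k n] by (simp add: n)
  finally show ?thesis by (simp add: n)
next
  case False
  then consider "k = n" | "n < k" by linarith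
  then show ?thesis by cases (simp_all add: gauss_binom_eq_0)
qed

lemma q_binomial_theorem:
  "(\<Prod>r=1..m. 1 - fps_const (a * fls_X ^ r) * fps_X) =
     Abs_fps (\<lambda>k. (-1) ^ k * a ^ k * fls_X ^ (Suc k choose 2) * gauss_binom m k)"
proof (induction m)
  case 0
  show ?case
    by (rule fps_ext) (simp add: gauss_binom_eq_0 numeral_2_eq_2 split: nat.split)
next
  case (Suc m)
  have split: "(\<Prod>r=1..Suc m. 1 - fps_const (a * fls_X ^ r) * fps_X) =
      (\<Prod>r=1..m. 1 - fps_const (a * fls_X ^ r) * fps_X)
        * (1 - fps_const (a * fls_X ^ Suc m) * fps_X)"
    by simp
  show ?case
  proof (rule fps_ext)
    fix k
    show "(\<Prod>r=1..Suc m. 1 - fps_const (a * fls_X ^ r) * fps_X) $ k =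
        Abs_fps (\<lambda>k. (-1) ^ k * a ^ k * fls_X ^ (Suc k choose 2)
          * gauss_binom (Suc m) k) $ k"
    proof (cases k)
      case (Suc i)
      have "fls_X ^ Suc m * fls_X ^ (Suc i choose 2) * gauss_binom m i =
          fls_X ^ (Suc (Suc i) choose 2) * (fls_X ^ (m - i) * gauss_binom m i)"
      proof (cases "i \<le> m")
        case True
        then have "Suc m + (Suc i choose 2) = (Suc (Suc i) choose 2) + (m - i)"
          by (simp add: choose_2_Suc)
        then show ?thesis by (metis mult.assoc power_add)
      qed (simp add: gauss_binom_eq_0)
      then show ?thesis
        unfolding split Suc.IH fps_mult_one_minus_const_X_nth
        by (auto simp add: \<open>k = Suc i\<close> gauss_binom_Suc_Suc' algebra_simps)
    qed (unfold split Suc.IH fps_mult_one_minus_const_X_nth, simp add: numeral_2_eq_2)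
  qed
qed

definition qpoch :: "nat \<Rightarrow> nat \<Rightarrow> rat fls fps" where
  "qpoch j m = (\<Prod>r=1..m. 1 - fps_const (fls_X ^ (r + j)) * fps_X)"

lemma qpoch_Suc: "qpoch j (Suc m) = qpoch j m * (1 - fps_const (fls_X ^ (Suc m + j)) * fps_X)"
  by (simp add: qpoch_def)

lemma qpoch_nth_0: "qpoch j m $ 0 = 1"
  by (induction m) (simp_all add: qpoch_Suc, simp add: qpoch_def)

lemma qpoch_conv_gauss_binom:
  "qpoch j m =
     Abs_fps (\<lambda>k. (-1) ^ k * fls_X ^ (j * k + (Suc k choose 2)) * gauss_binom m k)"
proof -
  have "qpoch j m = (\<Prod>r=1..m. 1 - fps_const (fls_X ^ j * fls_X ^ r) * fps_X)"
    by (simp add: qpoch_def power_add mult.commute)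
  also have "\<dots> =
      Abs_fps (\<lambda>k. (-1) ^ k * (fls_X ^ j) ^ k * fls_X ^ (Suc k choose 2) * gauss_binom m k)"
    by (rule q_binomial_theorem)
  finally show ?thesis
    by (simp add: power_add power_mult mult.assoc)
qed

definition tail_numerator :: "nat \<Rightarrow> nat \<Rightarrow> rat fls fps" where
  "tail_numerator j m = Abs_fps (\<lambda>k. if k \<le> j
     then (-1) ^ k * fls_X ^ (Suc (m + k) choose 2) * gauss_binom m (j - k) else 0)"

lemma tail_numerator_diag: "tail_numerator j j = fps_const (fls_X ^ (Suc j choose 2)) * qpoch j j"
proof (rule fps_ext)
  fix k
  show "tail_numerator j j $ k = (fps_const (fls_X ^ (Suc j choose 2)) * qpoch j j) $ k"
    by (cases "k \<le> j")
      (simp_all add: tail_numerator_def qpoch_conv_gauss_binom choose_2_add power_add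
        gauss_binom_symmetric gauss_binom_eq_0)
qed

lemma tail_numerator_Suc:
  "tail_numerator j m * (1 - fps_const (fls_X ^ (Suc m + j)) * fps_X)
     - fps_const (fls_X ^ (Suc m choose 2) * gauss_binom m j)
   = - (fps_X * tail_numerator j (Suc m))"
proof (rule fps_ext)
  fix k
  show "(tail_numerator j m * (1 - fps_const (fls_X ^ (Suc m + j)) * fps_X)
      - fps_const (fls_X ^ (Suc m choose 2) * gauss_binom m j)) $ k
    = (- (fps_X * tail_numerator j (Suc m))) $ k"
  proof (cases k)
    case (Suc i)
    consider "i < j" | "i = j" | "j < i" by linarith
    then show ?thesis
    proof cases
      case 1
      have "Suc m + j + (Suc (m + i) choose 2) = (Suc (Suc (m + i)) choose 2) + (j - i)"
        using 1 by (simp add: choose_2_Suc)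
      then have "fls_X ^ (Suc m + j) * fls_X ^ (Suc (m + i) choose 2)
          = fls_X ^ (Suc (Suc (m + i)) choose 2) * (fls_X ^ (j - i) :: rat fls)"
        by (metis power_add)
      moreover have "gauss_binom (Suc m) (j - i)
          = gauss_binom m (j - Suc i) + fls_X ^ (j - i) * gauss_binom m (j - i)"
        using gauss_binom_Suc_Suc[of m "j - Suc i"] 1 by (simp add: Suc_diff_Suc)
      ultimately show ?thesis
        using 1 by (simp add: Suc tail_numerator_def fps_mult_one_minus_const_X_nth algebra_simps)
    next
      case 2
      have "fls_X ^ (Suc m + j) * fls_X ^ (Suc (m + j) choose 2)
          = (fls_X ^ (Suc (Suc (m + j)) choose 2) :: rat fls)"
        by (simp add: choose_2_Suc add_ac flip: power_add)
      then show ?thesis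
        using 2 by (simp add: Suc tail_numerator_def fps_mult_one_minus_const_X_nth algebra_simps)
    qed (simp add: Suc tail_numerator_def fps_mult_one_minus_const_X_nth)
  qed (simp add: tail_numerator_def fps_mult_one_minus_const_X_nth)
qed

definition summand :: "nat \<Rightarrow> nat \<Rightarrow> rat fls fps" where
  "summand j i = fps_const ((-1) ^ i * fls_X ^ ((i + 1) choose 2) * qbinom i j) * fps_X ^ (i - j)
     * (\<Prod>r=1..i+1. inverse (1 - fps_const (fls_X ^ (r + j)) * fps_X))"

lemma summand_conv_qpoch:
  "summand j (n + j)
     = fps_const ((-1) ^ (n + j) * fls_X ^ (Suc (n + j) choose 2) * gauss_binom (n + j) j)
       * fps_X ^ n * inverse (qpoch j (Suc (n + j)))"
  by (simp add: summand_def gauss_binom_def qpoch_def inverse_prod_fps del: prod.cl_ivl_Suc)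

lemma summand_partial_sum_remainder:
  "fps_const ((-1) ^ j * fls_X ^ (Suc j choose 2)) - (\<Sum>i<n. summand j (i + j))
     = fps_X ^ n
       * (fps_const ((-1) ^ (n + j)) * tail_numerator j (n + j) * inverse (qpoch j (n + j)))"
proof (induction n)
  case 0
  show ?case
    by (simp add: tail_numerator_diag inverse_mult_eq_1' qpoch_nth_0 mult.assoc
        flip: fps_const_mult)
next
  case (Suc n)
  define m where "m = n + j"
  define L :: "rat fls fps" where "L = 1 - fps_const (fls_X ^ (Suc m + j)) * fps_X"
  have "inverse (qpoch j m) = inverse (qpoch j (Suc m)) * L"
    by (simp add: L_def qpoch_Suc fps_inverse_mult mult.assoc inverse_mult_eq_1)
  then have "fps_const ((-1) ^ m) * tail_numerator j m * inverse (qpoch j m)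
      - fps_const ((-1) ^ m * fls_X ^ (Suc m choose 2) * gauss_binom m j)
        * inverse (qpoch j (Suc m))
    = fps_const ((-1) ^ m) * inverse (qpoch j (Suc m))
      * (tail_numerator j m * L - fps_const (fls_X ^ (Suc m choose 2) * gauss_binom m j))"
    by (simp add: algebra_simps)
  also have "\<dots> = fps_X
      * (fps_const ((-1) ^ Suc m) * tail_numerator j (Suc m) * inverse (qpoch j (Suc m)))"
    unfolding L_def tail_numerator_Suc
    by (simp add: algebra_simps fps_const_neg [symmetric] del: fps_const_neg)
  finally show ?case
    using Suc.IH by (simp add: m_def summand_conv_qpoch algebra_simps)
qed

lemma sums_fps_if_X_power_divides_remainder:
  fixes f :: "nat \<Rightarrow> 'a::comm_ring_1 fps"
  assumes "\<And>n. s - (\<Sum>i<n. f i) = fps_X ^ n * r n"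
  shows "f sums s"
  unfolding sums_def
proof (rule tendsto_fpsI)
  fix k
  have "(\<Sum>i<n. f i) $ k = s $ k" if "k < n" for n
  proof -
    have "(s - (\<Sum>i<n. f i)) $ k = 0"
      using that by (simp only: assms fps_X_power_mult_nth if_True)
    then show ?thesis by simp
  qed
  then show "\<forall>\<^sub>F n in sequentially. (\<Sum>i<n. f i) $ k = s $ k"
    by (rule eventually_sequentiallyI[of "Suc k"]) simp
qed

theorem mainTheorem7:
  fixes j :: nat
  defines "q \<equiv> (fls_X :: rat fls)"
  defines "y \<equiv> (fps_X :: rat fls fps)"
  defines "t \<equiv> (\<lambda>i::nat. fps_const ((-1) ^ i * q ^ ((i + 1) choose 2) * qbinom i j)
                  * y ^ (i - j)
                  * (\<Prod>r=1..i+1. inverse (1 - fps_const (q ^ (r + j)) * y)))"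
  shows "summable (\<lambda>n. t (n + j)) \<and>
         fps_const ((-1) ^ j * fls_X_intpow (- int ((j + 1) choose 2))) * (\<Sum>n. t (n + j)) = 1"
proof -
  define N where "N = (j + 1) choose 2"
  have "t = summand j"
    by (simp add: t_def q_def y_def summand_def fun_eq_iff)
  then have sums: "(\<lambda>n. t (n + j)) sums fps_const ((-1) ^ j * fls_X ^ N)"
    using sums_fps_if_X_power_divides_remainder[OF summand_partial_sum_remainder]
    by (simp add: N_def)
  have "fls_X_intpow (- int N) * fls_X ^ N = (1 :: rat fls)"
    using fls_X_intpow_times_fls_X_intpow[of "- int N" "int N"]
    by (simp add: fls_X_power_conv_shift_1)
  then have "(-1) ^ j * fls_X_intpow (- int N) * ((-1) ^ j * fls_X ^ N) = (1 :: rat fls)"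
    by (simp add: algebra_simps flip: power_mult_distrib)
  moreover have "(\<Sum>n. t (n + j)) = fps_const ((-1) ^ j * fls_X ^ N)"
    using sums by (rule sums_unique [symmetric])
  ultimately show ?thesis
    using sums_summable[OF sums] by (simp only: N_def fps_const_mult fps_const_1_eq_1 simp_thms)
qed

end
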